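(* For any bipartite unitary $U\in\mathsf{U}(\mathcal{H}_A\otimes\mathcal{H}_B)$, $$1\le R_c(U)\le\xi(U)\le 2d_A^2d_B^2-1.$$
   Context: $d_A,d_B$ are the dimensions of $\mathcal{H}_A,\mathcal{H}_B$. The product extent $\xi(U)$ is the minimum of $2\|c\|_1^2-\|c\|_2^2$ over all decompositions $U=\sum_{j=1}^m c_jV_j\otimes W_j$ with $m\ge1$, $c\in\mathbb{R}^m$, $V_j\in\mathsf{U}(\mathcal{H}_A)$, $W_j\in\mathsf{U}(\mathcal{H}_B)$. The Choi–Jamiolkowski robustness is $R_c(U):=1+2R(J_U)$, where $J_U=(\mathrm{id}_{A'B'}\otimes\mathcal{U})(\Phi)$ is the Choi state of $\mathcal{U}(\rho)=U\rho U^\dagger$ ($\Phi$ the maximally entangled state between $A'B'$ and $AB$), regarded as a bipartite state with respect to $A'A\,|\,B'B$, and for a bipartite state $\rho$, $R(\rho)=\min\{s\ge0:\frac{1}{1+s}(\rho+s\sigma_-)\text{ is separable for some separable state }\sigma_-\}$ is its robustness of entanglement. *)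

theory Defs
  imports Complex_Main
begin

type_synonym 'n cmat = "'n \<Rightarrow> 'n \<Rightarrow> complex"

definition id_mat :: "'n cmat" where
  "id_mat i j = (if i = j then 1 else 0)"

definition mmult :: "'n::finite cmat \<Rightarrow> 'n cmat \<Rightarrow> 'n cmat" where
  "mmult A B i k = (\<Sum>j\<in>UNIV. A i j * B j k)"

definition adj :: "'n cmat \<Rightarrow> 'n cmat" where
  "adj A i j = cnj (A j i)"

definition unitary :: "'n::finite cmat \<Rightarrow> bool" where
  "unitary U \<longleftrightarrow> mmult (adj U) U = id_mat \<and> mmult U (adj U) = id_mat"

definition trace :: "'n::finite cmat \<Rightarrow> complex" where
  "trace A = (\<Sum>i\<in>UNIV. A i i)"

definition kron :: "'a cmat \<Rightarrow> 'b cmat \<Rightarrow> ('a \<times> 'b) cmat" where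
  "kron V W x y = V (fst x) (fst y) * W (snd x) (snd y)"

definition hermitian :: "'n cmat \<Rightarrow> bool" where
  "hermitian A \<longleftrightarrow> adj A = A"

definition psd :: "'n::finite cmat \<Rightarrow> bool" where
  "psd A \<longleftrightarrow> hermitian A \<and>
     (\<forall>v :: 'n \<Rightarrow> complex. 0 \<le> Re (\<Sum>i\<in>UNIV. \<Sum>j\<in>UNIV. cnj (v i) * A i j * v j))"

definition density :: "'n::finite cmat \<Rightarrow> bool" where
  "density \<rho> \<longleftrightarrow> psd \<rho> \<and> trace \<rho> = 1"

definition separable :: "('a::finite \<times> 'b::finite) cmat \<Rightarrow> bool" where
  "separable \<rho> \<longleftrightarrow> (\<exists>(m::nat) (p::nat \<Rightarrow> real) (\<rho>A::nat \<Rightarrow> 'a cmat) (\<rho>B::nat \<Rightarrow> 'b cmat).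
      (\<forall>j<m. 0 \<le> p j \<and> density (\<rho>A j) \<and> density (\<rho>B j)) \<and>
      (\<Sum>j<m. p j) = 1 \<and>
      \<rho> = (\<lambda>x y. \<Sum>j<m. complex_of_real (p j) * kron (\<rho>A j) (\<rho>B j) x y))"

text \<open>Robustness of entanglement (the minimum in the paper, written as an infimum).\<close>
definition robustness :: "('a::finite \<times> 'b::finite) cmat \<Rightarrow> real" where
  "robustness \<rho> = Inf {s::real. 0 \<le> s \<and> (\<exists>\<sigma>::('a \<times> 'b) cmat. separable \<sigma> \<and>
       separable (\<lambda>x y. (\<rho> x y + complex_of_real s * \<sigma> x y) / complex_of_real (1 + s)))}"

text \<open>Choi state J_U = (id_{A'B'} \<otimes> U) \<Phi>, \<Phi> = |\<Omega>\<rangle>\<langle>\<Omega>|/(d_A d_B), \<Omega> = \<Sum>_x |x\<rangle>_{A'B'}|x\<rangle>_{AB},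
  regarded as a bipartite state w.r.t. A'A | B'B.  The index ((a',a),(b',b)) corresponds to
  the basis vector |a'\<rangle>_{A'}|b'\<rangle>_{B'}|a\<rangle>_A|b\<rangle>_B.\<close>
definition choi :: "('a::finite \<times> 'b::finite) cmat \<Rightarrow> (('a \<times> 'a) \<times> ('b \<times> 'b)) cmat" where
  "choi U x y =
     U (snd (fst x), snd (snd x)) (fst (fst x), fst (snd x)) *
     cnj (U (snd (fst y), snd (snd y)) (fst (fst y), fst (snd y))) /
     of_nat (card (UNIV :: 'a set) * card (UNIV :: 'b set))"

definition choi_robustness :: "('a::finite \<times> 'b::finite) cmat \<Rightarrow> real" where
  "choi_robustness U = 1 + 2 * robustness (choi U)"

text \<open>Product extent (the minimum in the paper, written as an infimum).\<close>
definition product_extent :: "('a::finite \<times> 'b::finite) cmat \<Rightarrow> real" where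
  "product_extent U = Inf {2 * (\<Sum>j<m. \<bar>c j\<bar>)^2 - (\<Sum>j<m. (c j)^2) | m c V W.
      1 \<le> m \<and> (\<forall>j<m. unitary ((V::nat \<Rightarrow> 'a cmat) j) \<and> unitary ((W::nat \<Rightarrow> 'b cmat) j)) \<and>
      U = (\<lambda>x y. \<Sum>j<m. complex_of_real (c j) * kron (V j) (W j) x y)}"

end

(*
  If U = sum_j c_j V_j (x) W_j with local unitaries, the Choi state is
  pure, J_U = |psi><psi| with psi = sum_j c_j x_j (x) y_j, where x_j, y_j are the normalised Choi
  vectors of V_j, W_j.  By polarization every cross term c_j c_k (x_j x_k* (x) y_j y_k* + h.c.) is
  a real combination of product projectors onto (x_j + i^q x_k) (x) (y_j + i^q' y_k).  Splitting
  all coefficients by sign gives J_U = tau_+ - tau_- with tau_+, tau_- unnormalised separable,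
  tr tau_+ - tr tau_- = 1 and tr tau_+ + tr tau_- = 2 ||c||_1^2 - ||c||_2^2.  Mixing in
  tau_- / tr tau_- shows R(J_U) <= tr tau_-, i.e. R_c(U) <= 2 ||c||_1^2 - ||c||_2^2.

  xi(U) <= 2 d_A^2 d_B^2 - 1.  Expand U in the d_A^2 d_B^2 products of Weyl (clock-and-shift)
  operators, move the phase of each coefficient into the unitary on A, and use Parseval
  (||c||_2 = 1) together with Cauchy-Schwarz (||c||_1^2 <= d_A^2 d_B^2).
*)
theory Submission
  imports Defs "HOL-Analysis.Complex_Transcendental"
begin

definition scaled_separable :: "('a::finite \<times> 'b::finite) cmat \<Rightarrow> real \<Rightarrow> bool" where
  "scaled_separable \<rho> t \<longleftrightarrow> (\<exists>(m::nat) (p::nat \<Rightarrow> real) (\<rho>A::nat \<Rightarrow> 'a cmat) (\<rho>B::nat \<Rightarrow> 'b cmat).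
      (\<forall>j<m. 0 \<le> p j \<and> density (\<rho>A j) \<and> density (\<rho>B j)) \<and>
      (\<Sum>j<m. p j) = t \<and>
      \<rho> = (\<lambda>x y. \<Sum>j<m. complex_of_real (p j) * kron (\<rho>A j) (\<rho>B j) x y))"

lemma separable_iff_scaled_separable: "separable \<rho> \<longleftrightarrow> scaled_separable \<rho> 1"
  by (simp add: separable_def scaled_separable_def)

lemma scaled_separable_zero: "scaled_separable (\<lambda>x y. 0) 0"
  unfolding scaled_separable_def by (rule exI[of _ 0]) auto

lemma sum_lessThan_add:
  "(\<Sum>j<m + n. f j) = (\<Sum>j<m. f j) + (\<Sum>j<n. f (m + j))" for f :: "nat \<Rightarrow> 'c::comm_monoid_add"
  by (induction n) (auto simp: add.assoc)

lemma scaled_separable_add: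
  fixes \<rho>1 :: "('a::finite \<times> 'b::finite) cmat"
  assumes "scaled_separable \<rho>1 t1" "scaled_separable \<rho>2 t2"
  shows "scaled_separable (\<lambda>x y. \<rho>1 x y + \<rho>2 x y) (t1 + t2)"
proof -
  obtain m1 p1 and A1 :: "nat \<Rightarrow> 'a cmat" and B1 :: "nat \<Rightarrow> 'b cmat"
    where h1: "\<forall>j<m1. 0 \<le> p1 j \<and> density (A1 j) \<and> density (B1 j)" "(\<Sum>j<m1. p1 j) = t1"
      "\<rho>1 = (\<lambda>x y. \<Sum>j<m1. complex_of_real (p1 j) * kron (A1 j) (B1 j) x y)"
    using assms(1) unfolding scaled_separable_def by blast
  obtain m2 p2 and A2 :: "nat \<Rightarrow> 'a cmat" and B2 :: "nat \<Rightarrow> 'b cmat"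
    where h2: "\<forall>j<m2. 0 \<le> p2 j \<and> density (A2 j) \<and> density (B2 j)" "(\<Sum>j<m2. p2 j) = t2"
      "\<rho>2 = (\<lambda>x y. \<Sum>j<m2. complex_of_real (p2 j) * kron (A2 j) (B2 j) x y)"
    using assms(2) unfolding scaled_separable_def by blast
  define p where "p j = (if j < m1 then p1 j else p2 (j - m1))" for j
  define A where "A j = (if j < m1 then A1 j else A2 (j - m1))" for j
  define B where "B j = (if j < m1 then B1 j else B2 (j - m1))" for j
  show ?thesis unfolding scaled_separable_def
  proof (intro exI conjI)
    show "\<forall>j<m1 + m2. 0 \<le> p j \<and> density (A j) \<and> density (B j)"
      using h1(1) h2(1) by (auto simp: p_def A_def B_def)
    show "(\<Sum>j<m1 + m2. p j) = t1 + t2"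
      using h1(2) h2(2) by (simp add: sum_lessThan_add p_def)
    show "(\<lambda>x y. \<rho>1 x y + \<rho>2 x y) =
        (\<lambda>x y. \<Sum>j<m1 + m2. complex_of_real (p j) * kron (A j) (B j) x y)"
      unfolding sum_lessThan_add h1(3) h2(3) by (simp add: p_def A_def B_def)
  qed
qed

lemma scaled_separable_scale:
  fixes \<rho> :: "('a::finite \<times> 'b::finite) cmat"
  assumes "scaled_separable \<rho> t" "0 \<le> c"
  shows "scaled_separable (\<lambda>x y. complex_of_real c * \<rho> x y) (c * t)"
proof -
  obtain m p and \<rho>A :: "nat \<Rightarrow> 'a cmat" and \<rho>B :: "nat \<Rightarrow> 'b cmat" where h: "\<forall>j<m. 0 \<le> p j \<and> density (\<rho>A j) \<and> density (\<rho>B j)"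
    "(\<Sum>j<m. p j) = t" "\<rho> = (\<lambda>x y. \<Sum>j<m. complex_of_real (p j) * kron (\<rho>A j) (\<rho>B j) x y)"
    using assms(1) unfolding scaled_separable_def by blast
  show ?thesis unfolding scaled_separable_def
  proof (intro exI conjI)
    show "\<forall>j<m. 0 \<le> c * p j \<and> density (\<rho>A j) \<and> density (\<rho>B j)"
      using h(1) assms(2) by auto
    show "(\<Sum>j<m. c * p j) = c * t"
      using h(2) by (simp flip: sum_distrib_left)
    show "(\<lambda>x y. complex_of_real c * \<rho> x y) =
        (\<lambda>x y. \<Sum>j<m. complex_of_real (c * p j) * kron (\<rho>A j) (\<rho>B j) x y)"
      unfolding h(3) by (simp add: sum_distrib_left mult.assoc)
  qed
qed

lemma scaled_separable_sum:
  assumes "finite I" "\<And>i. i \<in> I \<Longrightarrow> scaled_separable (\<tau> i) (t i)"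
  shows "scaled_separable (\<lambda>x y. \<Sum>i\<in>I. \<tau> i x y) (\<Sum>i\<in>I. t i)"
  using assms
proof (induction I rule: finite_induct)
  case empty
  then show ?case using scaled_separable_zero by simp
next
  case (insert a F)
  then show ?case using scaled_separable_add[of "\<tau> a" "t a"] by simp
qed

lemma scaled_separable_trace_zero:
  fixes \<rho> :: "('a::finite \<times> 'b::finite) cmat"
  assumes "scaled_separable \<rho> 0"
  shows "\<rho> = (\<lambda>x y. 0)"
proof -
  obtain m p and \<rho>A :: "nat \<Rightarrow> 'a cmat" and \<rho>B :: "nat \<Rightarrow> 'b cmat" where h: "\<forall>j<m. 0 \<le> p j" "(\<Sum>j<m. p j) = 0"
    "\<rho> = (\<lambda>x y. \<Sum>j<m. complex_of_real (p j) * kron (\<rho>A j) (\<rho>B j) x y)"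
    using assms unfolding scaled_separable_def by blast
  then have "\<forall>j\<in>{..<m}. p j = 0" by (subst (asm) sum_nonneg_eq_0_iff) auto
  then show ?thesis using h(3) by simp
qed

definition robust_weights :: "('a::finite \<times> 'b::finite) cmat \<Rightarrow> real set" where
  "robust_weights \<rho> = {s. 0 \<le> s \<and> (\<exists>\<sigma>. separable \<sigma> \<and>
       separable (\<lambda>x y. (\<rho> x y + complex_of_real s * \<sigma> x y) / complex_of_real (1 + s)))}"

lemma robustness_eq_Inf: "robustness \<rho> = Inf (robust_weights \<rho>)"
  unfolding robustness_def robust_weights_def ..

lemma robust_weight_of_difference:
  assumes plus: "scaled_separable \<tau>p (1 + t)" and minus: "scaled_separable \<tau>m t"
    and "0 \<le> t"
  shows "t \<in> robust_weights (\<lambda>x y. \<tau>p x y - \<tau>m x y)"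
proof (cases "t = 0")
  case True
  then have "\<tau>m = (\<lambda>x y. 0)" using minus scaled_separable_trace_zero by blast
  then show ?thesis
    using plus True by (auto simp: robust_weights_def separable_iff_scaled_separable)
next
  case False
  with \<open>0 \<le> t\<close> have "0 < t" by simp
  define \<sigma> where "\<sigma> x y = complex_of_real (1 / t) * \<tau>m x y" for x y
  have "separable \<sigma>"
    unfolding separable_iff_scaled_separable \<sigma>_def
    using scaled_separable_scale[OF minus, of "1 / t"] \<open>0 < t\<close> by simp
  moreover have "separable (\<lambda>x y. (\<tau>p x y - \<tau>m x y + complex_of_real t * \<sigma> x y) / complex_of_real (1 + t))"
  proof -
    have "(\<lambda>x y. (\<tau>p x y - \<tau>m x y + complex_of_real t * \<sigma> x y) / complex_of_real (1 + t))
        = (\<lambda>x y. complex_of_real (1 / (1 + t)) * \<tau>p x y)"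
      using \<open>0 < t\<close> by (auto simp: \<sigma>_def fun_eq_iff field_simps)
    then show ?thesis
      unfolding separable_iff_scaled_separable
      using scaled_separable_scale[OF plus, of "1 / (1 + t)"] \<open>0 < t\<close> by simp
  qed
  ultimately show ?thesis using \<open>0 \<le> t\<close> unfolding robust_weights_def by blast
qed

definition outer :: "('n \<Rightarrow> complex) \<Rightarrow> 'n cmat" where
  "outer z i j = z i * cnj (z j)"

definition sqnorm :: "('n::finite \<Rightarrow> complex) \<Rightarrow> real" where
  "sqnorm z = (\<Sum>i\<in>UNIV. (cmod (z i))\<^sup>2)"

lemma sqnorm_nonneg: "0 \<le> sqnorm z"
  unfolding sqnorm_def by (simp add: sum_nonneg)

lemma sqnorm_eq_0_iff: "sqnorm z = 0 \<longleftrightarrow> z = (\<lambda>i. 0)"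
  unfolding sqnorm_def by (subst sum_nonneg_eq_0_iff) (auto simp: fun_eq_iff)

lemma trace_outer: "trace (outer z) = complex_of_real (sqnorm z)"
  unfolding trace_def outer_def sqnorm_def of_real_sum by (simp only: complex_norm_square)

lemma trace_kron: "trace (kron A B) = trace A * trace B"
  unfolding trace_def kron_def
  by (simp add: sum_product UNIV_Times_UNIV[symmetric] sum.cartesian_product case_prod_unfold
      del: UNIV_Times_UNIV)

lemma density_normalized_outer:
  assumes "sqnorm z \<noteq> 0"
  shows "density (\<lambda>i j. outer z i j / complex_of_real (sqnorm z))"
proof -
  have "hermitian (\<lambda>i j. outer z i j / complex_of_real (sqnorm z))"
    unfolding hermitian_def adj_def outer_def by (auto simp: fun_eq_iff mult.commute)
  moreover have "0 \<le> Re (\<Sum>i\<in>UNIV. \<Sum>j\<in>UNIV. cnj (v i) * (outer z i j / complex_of_real (sqnorm z)) * v j)"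
    for v
  proof -
    let ?s = "\<Sum>i\<in>UNIV. cnj (v i) * z i"
    have "?s * cnj ?s = (\<Sum>i\<in>UNIV. \<Sum>j\<in>UNIV. (cnj (v i) * z i) * (v j * cnj (z j)))"
      by (simp add: sum_product)
    then have "(\<Sum>i\<in>UNIV. \<Sum>j\<in>UNIV. cnj (v i) * (outer z i j / complex_of_real (sqnorm z)) * v j)
        = ?s * cnj ?s / complex_of_real (sqnorm z)"
      unfolding outer_def by (simp add: sum_divide_distrib mult_ac)
    also have "\<dots> = complex_of_real ((cmod ?s)\<^sup>2 / sqnorm z)"
      by (metis complex_norm_square of_real_divide)
    finally show ?thesis using sqnorm_nonneg[of z] by simp
  qed
  moreover have "trace (\<lambda>i j. outer z i j / complex_of_real (sqnorm z)) = 1"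
    using trace_outer[of z] assms by (simp add: trace_def sum_divide_distrib[symmetric])
  ultimately show ?thesis unfolding density_def psd_def by blast
qed

lemma scaled_separable_kron_outer:
  assumes "0 \<le> w"
  shows "scaled_separable (\<lambda>x y. complex_of_real w * kron (outer u) (outer v) x y)
    (w * sqnorm u * sqnorm v)"
proof (cases "sqnorm u = 0 \<or> sqnorm v = 0")
  case True
  then have "(\<lambda>x y. complex_of_real w * kron (outer u) (outer v) x y) = (\<lambda>x y. 0)"
    by (auto simp: sqnorm_eq_0_iff kron_def outer_def fun_eq_iff)
  then show ?thesis using True scaled_separable_zero by auto
next
  case False
  let ?p = "\<lambda>_::nat. w * sqnorm u * sqnorm v"
  let ?A = "\<lambda>_::nat. \<lambda>i j. outer u i j / complex_of_real (sqnorm u)"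
  let ?B = "\<lambda>_::nat. \<lambda>i j. outer v i j / complex_of_real (sqnorm v)"
  show ?thesis unfolding scaled_separable_def
  proof (intro exI conjI)
    show "\<forall>j<1. 0 \<le> ?p j \<and> density (?A j) \<and> density (?B j)"
      using False assms density_normalized_outer[of u] density_normalized_outer[of v]
        sqnorm_nonneg[of u] sqnorm_nonneg[of v] by simp
    show "(\<Sum>j<1. ?p j) = w * sqnorm u * sqnorm v"
      by simp
    show "(\<lambda>x y. complex_of_real w * kron (outer u) (outer v) x y)
        = (\<lambda>x y. \<Sum>j<1. complex_of_real (?p j) * kron (?A j) (?B j) x y)"
      using False by (auto simp: kron_def fun_eq_iff)
  qed
qed

definition product_mixture ::
    "'i set \<Rightarrow> ('i \<Rightarrow> real) \<Rightarrow> ('i \<Rightarrow> 'a \<Rightarrow> complex) \<Rightarrow> ('i \<Rightarrow> 'b \<Rightarrow> complex) \<Rightarrow> ('a \<times> 'b) cmat" where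
  "product_mixture I w u v x y = (\<Sum>i\<in>I. complex_of_real (w i) * kron (outer (u i)) (outer (v i)) x y)"

definition mixture_mass ::
    "'i set \<Rightarrow> ('i \<Rightarrow> real) \<Rightarrow> ('i \<Rightarrow> 'a::finite \<Rightarrow> complex) \<Rightarrow> ('i \<Rightarrow> 'b::finite \<Rightarrow> complex) \<Rightarrow> real" where
  "mixture_mass I w u v = (\<Sum>i\<in>I. w i * sqnorm (u i) * sqnorm (v i))"

lemma scaled_separable_product_mixture:
  assumes "finite I" "\<And>i. i \<in> I \<Longrightarrow> 0 \<le> w i"
  shows "scaled_separable (product_mixture I w u v) (mixture_mass I w u v)"
  unfolding product_mixture_def[abs_def] mixture_mass_def
  using assms by (intro scaled_separable_sum scaled_separable_kron_outer)

lemma trace_product_mixture: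
  "trace (product_mixture I w u v) = complex_of_real (mixture_mass I w u v)"
proof -
  have "trace (product_mixture I w u v) = (\<Sum>i\<in>I. complex_of_real (w i) * trace (kron (outer (u i)) (outer (v i))))"
    unfolding trace_def product_mixture_def by (subst sum.swap) (simp add: sum_distrib_left)
  then show ?thesis
    unfolding trace_kron trace_outer mixture_mass_def by (simp add: mult.assoc)
qed

lemma robust_weight_product_mixture:
  assumes "finite I" and trace1: "trace (product_mixture I r u v) = 1"
  shows "(mixture_mass I (\<lambda>i. \<bar>r i\<bar>) u v - 1) / 2 \<in> robust_weights (product_mixture I r u v)"
proof -
  define pos where "pos i = max 0 (r i)" for i
  define neg where "neg i = max 0 (- r i)" for i
  let ?t = "mixture_mass I neg u v"
  have split: "r i = pos i - neg i" "\<bar>r i\<bar> = pos i + neg i" for i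
    unfolding pos_def neg_def by auto
  have "mixture_mass I r u v = 1"
    using trace1 unfolding trace_product_mixture by simp
  then have mass_pos: "mixture_mass I pos u v = 1 + ?t"
    unfolding mixture_mass_def split(1) by (simp add: sum_subtractf algebra_simps)
  have "(mixture_mass I (\<lambda>i. \<bar>r i\<bar>) u v - 1) / 2 = ?t"
    using mass_pos unfolding mixture_mass_def split(2) by (simp add: sum.distrib algebra_simps)
  moreover have "product_mixture I r u v
      = (\<lambda>x y. product_mixture I pos u v x y - product_mixture I neg u v x y)"
    unfolding product_mixture_def split(1) by (simp add: fun_eq_iff sum_subtractf left_diff_distrib)
  moreover have "scaled_separable (product_mixture I pos u v) (1 + ?t)"
    unfolding mass_pos[symmetric] using \<open>finite I\<close>
    by (rule scaled_separable_product_mixture) (simp add: pos_def)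
  moreover have "scaled_separable (product_mixture I neg u v) ?t"
    using \<open>finite I\<close> by (rule scaled_separable_product_mixture) (simp add: neg_def)
  moreover have "0 \<le> ?t"
    unfolding mixture_mass_def neg_def by (intro sum_nonneg mult_nonneg_nonneg sqnorm_nonneg) auto
  ultimately show ?thesis
    using robust_weight_of_difference by simp
qed

section \<open>Polarization of a pure state with a product expansion\<close>

definition offdiag :: "nat \<Rightarrow> (nat \<times> nat) set" where
  "offdiag m = {(j, k). j < m \<and> k < m \<and> j \<noteq> k}"

lemma finite_offdiag: "finite (offdiag m)"
  by (rule finite_subset[of _ "{..<m} \<times> {..<m}"]) (auto simp: offdiag_def)

lemma sum_square_diag_offdiag:
  "(\<Sum>j<m. \<Sum>k<m. g j k) = (\<Sum>j<m. g j j) + (\<Sum>(j, k)\<in>offdiag m. g j k)"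
proof -
  have "(\<Sum>j<m. \<Sum>k<m. g j k) = (\<Sum>(j, k)\<in>(\<lambda>j. (j, j)) ` {..<m} \<union> offdiag m. g j k)"
    unfolding sum.cartesian_product by (rule sum.cong) (auto simp: offdiag_def)
  also have "\<dots> = (\<Sum>(j, k)\<in>(\<lambda>j. (j, j)) ` {..<m}. g j k) + (\<Sum>(j, k)\<in>offdiag m. g j k)"
    using finite_offdiag by (intro sum.union_disjoint) (auto simp: offdiag_def)
  also have "(\<Sum>(j, k)\<in>(\<lambda>j. (j, j)) ` {..<m}. g j k) = (\<Sum>j<m. g j j)"
    by (subst sum.reindex) (auto simp: inj_on_def)
  finally show ?thesis .
qed

lemma sum_offdiag_swap: "(\<Sum>(j, k)\<in>offdiag m. g j k) = (\<Sum>(j, k)\<in>offdiag m. g k j)"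
proof -
  have "bij_betw (\<lambda>(j, k). (k, j)) (offdiag m) (offdiag m)"
    by (rule bij_betw_imageI) (auto simp: offdiag_def inj_on_def image_iff)
  from sum.reindex_bij_betw[OF this, of "\<lambda>(j, k). g j k"] show ?thesis
    by (simp add: case_prod_unfold)
qed

lemma sum_abs_squared_offdiag:
  fixes c :: "nat \<Rightarrow> real"
  shows "(\<Sum>j<m. \<bar>c j\<bar>)\<^sup>2 = (\<Sum>j<m. (c j)\<^sup>2) + (\<Sum>(j, k)\<in>offdiag m. \<bar>c j * c k\<bar>)"
proof -
  have "(\<Sum>j<m. \<bar>c j\<bar>)\<^sup>2 = (\<Sum>j<m. \<Sum>k<m. \<bar>c j * c k\<bar>)"
    by (simp add: power2_eq_square sum_product abs_mult)
  then show ?thesis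
    unfolding sum_square_diag_offdiag by (simp add: power2_eq_square)
qed

lemma polarization_identity:
  fixes a a' b b' e e' f f' :: complex
  shows "(\<Sum>q<4::nat. \<Sum>q'<4::nat. complex_of_real (Re (\<i> ^ (q + q'))) *
      ((a + \<i> ^ q * b) * cnj (a' + \<i> ^ q * b')) * ((e + \<i> ^ q' * f) * cnj (e' + \<i> ^ q' * f')))
    = 8 * (a * cnj b' * e * cnj f' + b * cnj a' * f * cnj e')"
  by (simp add: eval_nat_numeral algebra_simps)

lemma polarization_mass:
  fixes G H :: complex
  shows "(\<Sum>q<4::nat. \<Sum>q'<4::nat. \<bar>Re (\<i> ^ (q + q'))\<bar> *
      ((2 + 2 * Re (cnj (\<i> ^ q) * G)) * (2 + 2 * Re (cnj (\<i> ^ q') * H)))) = 32"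
  by (simp add: eval_nat_numeral algebra_simps)

lemma cnj_mult_self_unimodular:
  assumes "cmod z = 1"
  shows "cnj z * z = 1" "z * cnj z = 1"
  using assms by (metis complex_norm_square mult.commute of_real_1 power_one)+

lemma sqnorm_add_unimodular:
  assumes "cmod \<omega> = 1"
  shows "sqnorm (\<lambda>p. a p + \<omega> * b p) = sqnorm a + sqnorm b + 2 * Re (cnj \<omega> * (\<Sum>p\<in>UNIV. a p * cnj (b p)))"
proof -
  have "cnj \<omega> * \<omega> = 1"
    using assms by (rule cnj_mult_self_unimodular)
  have entry: "(cmod (s + \<omega> * t))\<^sup>2 = (cmod s)\<^sup>2 + (cmod t)\<^sup>2 + 2 * Re (cnj \<omega> * (s * cnj t))" for s t
  proof -
    have "complex_of_real ((cmod (s + \<omega> * t))\<^sup>2) = (s + \<omega> * t) * cnj (s + \<omega> * t)"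
      by (rule complex_norm_square)
    also have "\<dots> = s * cnj s + (cnj \<omega> * \<omega>) * (t * cnj t) + cnj \<omega> * (s * cnj t) + cnj (cnj \<omega> * (s * cnj t))"
      by (simp add: algebra_simps)
    also have "\<dots> = complex_of_real ((cmod s)\<^sup>2 + (cmod t)\<^sup>2) + cnj \<omega> * (s * cnj t) + cnj (cnj \<omega> * (s * cnj t))"
      using \<open>cnj \<omega> * \<omega> = 1\<close> by (simp only: of_real_add complex_norm_square mult_1)
    finally show ?thesis
      by (metis Re_complex_of_real complex_add_cnj plus_complex.sel(1) add.assoc of_real_add)
  qed
  show ?thesis
    unfolding sqnorm_def entry by (simp add: sum.distrib sum_distrib_left Re_sum[symmetric])
qed

definition product_sum ::
    "nat \<Rightarrow> (nat \<Rightarrow> real) \<Rightarrow> (nat \<Rightarrow> 'a \<Rightarrow> complex) \<Rightarrow> (nat \<Rightarrow> 'b \<Rightarrow> complex) \<Rightarrow> 'a \<times> 'b \<Rightarrow> complex" where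
  "product_sum m c x y z = (\<Sum>j<m. complex_of_real (c j) * x j (fst z) * y j (snd z))"

definition extent_cost :: "nat \<Rightarrow> (nat \<Rightarrow> real) \<Rightarrow> real" where
  "extent_cost m c = 2 * (\<Sum>j<m. \<bar>c j\<bar>)\<^sup>2 - (\<Sum>j<m. (c j)\<^sup>2)"

(* Inl j carries the diagonal term of |psi><psi|, Inr ((j, k), (q, q')) the projector onto
  (x_j + i^q x_k) (x) (y_j + i^q' y_k); by polarization_identity the weights below add up to the
  cross terms, each ordered pair (j, k) contributing half of them. *)
type_synonym polar_index = "nat + (nat \<times> nat) \<times> (nat \<times> nat)"

definition polar_indices :: "nat \<Rightarrow> polar_index set" where
  "polar_indices m = {..<m} <+> offdiag m \<times> ({..<4} \<times> {..<4})"

fun polar_weight :: "(nat \<Rightarrow> real) \<Rightarrow> polar_index \<Rightarrow> real" where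
  "polar_weight c (Inl j) = (c j)\<^sup>2"
| "polar_weight c (Inr ((j, k), (q, q'))) = c j * c k * Re (\<i> ^ (q + q')) / 16"

fun polar_left :: "(nat \<Rightarrow> 'a \<Rightarrow> complex) \<Rightarrow> polar_index \<Rightarrow> 'a \<Rightarrow> complex" where
  "polar_left x (Inl j) = x j"
| "polar_left x (Inr ((j, k), (q, q'))) = (\<lambda>p. x j p + \<i> ^ q * x k p)"

fun polar_right :: "(nat \<Rightarrow> 'b \<Rightarrow> complex) \<Rightarrow> polar_index \<Rightarrow> 'b \<Rightarrow> complex" where
  "polar_right y (Inl j) = y j"
| "polar_right y (Inr ((j, k), (q, q'))) = (\<lambda>p. y j p + \<i> ^ q' * y k p)"

lemma finite_polar_indices: "finite (polar_indices m)"
  unfolding polar_indices_def using finite_offdiag by auto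

lemma sum_polar_indices:
  "(\<Sum>i\<in>polar_indices m. f i) =
    (\<Sum>j<m. f (Inl j)) + (\<Sum>(j, k)\<in>offdiag m. \<Sum>q<4. \<Sum>q'<4. f (Inr ((j, k), (q, q'))))"
  unfolding polar_indices_def using finite_offdiag
  by (simp add: sum.Plus sum.cartesian_product case_prod_unfold)

lemma outer_product_sum:
  "outer (product_sum m c x y) = product_mixture (polar_indices m) (polar_weight c) (polar_left x) (polar_right y)"
proof (intro ext)
  fix z z'
  define g where "g j k = complex_of_real (c j * c k) *
      (x j (fst z) * cnj (x k (fst z')) * (y j (snd z) * cnj (y k (snd z'))))" for j k
  define T where "T i = complex_of_real (polar_weight c i) *
      kron (outer (polar_left x i)) (outer (polar_right y i)) z z'" for i
  have pair: "(g j k + g k j) / 2 = (\<Sum>q<4. \<Sum>q'<4. T (Inr ((j, k), (q, q'))))" for j k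
  proof -
    have "(\<Sum>q<4. \<Sum>q'<4. T (Inr ((j, k), (q, q'))))
      = complex_of_real (c j * c k / 16) * (\<Sum>q<4::nat. \<Sum>q'<4::nat. complex_of_real (Re (\<i> ^ (q + q'))) *
           ((x j (fst z) + \<i> ^ q * x k (fst z)) * cnj (x j (fst z') + \<i> ^ q * x k (fst z'))) *
           ((y j (snd z) + \<i> ^ q' * y k (snd z)) * cnj (y j (snd z') + \<i> ^ q' * y k (snd z'))))"
      unfolding T_def kron_def outer_def by (simp add: sum_distrib_left algebra_simps)
    then show ?thesis
      unfolding polarization_identity g_def by (simp add: algebra_simps)
  qed
  have diag: "g j j = T (Inl j)" for j
    unfolding g_def T_def kron_def outer_def by (simp add: power2_eq_square algebra_simps)
  have "outer (product_sum m c x y) z z' = (\<Sum>j<m. \<Sum>k<m. g j k)"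
    unfolding outer_def product_sum_def g_def by (simp add: sum_product algebra_simps)
  also have "\<dots> = (\<Sum>j<m. g j j) + (\<Sum>(j, k)\<in>offdiag m. (g j k + g k j) / 2)"
    unfolding sum_square_diag_offdiag using sum_offdiag_swap[of g m]
    by (simp add: case_prod_unfold sum.distrib flip: sum_divide_distrib)
  also have "\<dots> = product_mixture (polar_indices m) (polar_weight c) (polar_left x) (polar_right y) z z'"
    unfolding product_mixture_def sum_polar_indices pair diag T_def ..
  finally show "outer (product_sum m c x y) z z' =
      product_mixture (polar_indices m) (polar_weight c) (polar_left x) (polar_right y) z z'" .
qed

lemma polar_mass_eq_extent_cost:
  assumes unit: "\<forall>j<m. sqnorm (x j) = 1 \<and> sqnorm (y j) = 1"
  shows "mixture_mass (polar_indices m) (\<lambda>i. \<bar>polar_weight c i\<bar>) (polar_left x) (polar_right y) = extent_cost m c"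
proof -
  have unimodular: "cmod (\<i> ^ q) = 1" for q :: nat
    by (simp add: norm_power)
  have "(\<Sum>q<4. \<Sum>q'<4. \<bar>polar_weight c (Inr ((j, k), (q, q')))\<bar> *
      sqnorm (polar_left x (Inr ((j, k), (q, q')))) * sqnorm (polar_right y (Inr ((j, k), (q, q')))))
    = 2 * \<bar>c j * c k\<bar>" if "(j, k) \<in> offdiag m" for j k
  proof -
    have "sqnorm (x j) = 1" "sqnorm (x k) = 1" "sqnorm (y j) = 1" "sqnorm (y k) = 1"
      using that unit unfolding offdiag_def by auto
    then have "(\<Sum>q<4. \<Sum>q'<4. \<bar>polar_weight c (Inr ((j, k), (q, q')))\<bar> *
        sqnorm (polar_left x (Inr ((j, k), (q, q')))) * sqnorm (polar_right y (Inr ((j, k), (q, q')))))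
      = \<bar>c j * c k\<bar> / 16 * (\<Sum>q<4::nat. \<Sum>q'<4::nat. \<bar>Re (\<i> ^ (q + q'))\<bar> *
          ((2 + 2 * Re (cnj (\<i> ^ q) * (\<Sum>p\<in>UNIV. x j p * cnj (x k p)))) *
           (2 + 2 * Re (cnj (\<i> ^ q') * (\<Sum>p\<in>UNIV. y j p * cnj (y k p))))))"
      by (simp add: sqnorm_add_unimodular[OF unimodular] sum_distrib_left abs_mult mult_ac)
    then show ?thesis
      unfolding polarization_mass by simp
  qed
  then have "mixture_mass (polar_indices m) (\<lambda>i. \<bar>polar_weight c i\<bar>) (polar_left x) (polar_right y)
      = (\<Sum>j<m. (c j)\<^sup>2) + (\<Sum>(j, k)\<in>offdiag m. 2 * \<bar>c j * c k\<bar>)"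
    unfolding mixture_mass_def sum_polar_indices using unit
    by (auto intro!: sum.cong simp: case_prod_unfold)
  then show ?thesis
    unfolding extent_cost_def sum_abs_squared_offdiag by (simp add: sum_distrib_left case_prod_unfold)
qed

section \<open>The Choi state of a product expansion\<close>

lemma unitary_frobenius:
  fixes V :: "'n::finite cmat"
  assumes "unitary V"
  shows "(\<Sum>i\<in>UNIV. \<Sum>j\<in>UNIV. (cmod (V i j))\<^sup>2) = real (card (UNIV :: 'n set))"
proof -
  have "(\<Sum>i\<in>UNIV. (cmod (V i j))\<^sup>2) = 1" for j
  proof -
    have "complex_of_real (\<Sum>i\<in>UNIV. (cmod (V i j))\<^sup>2) = mmult (adj V) V j j"
      unfolding mmult_def adj_def of_real_sum complex_norm_square by (simp add: mult.commute)
    also have "\<dots> = 1"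
      using assms unfolding unitary_def by (simp add: id_mat_def)
    finally show ?thesis by (metis of_real_eq_1_iff)
  qed
  then show ?thesis
    by (subst sum.swap) simp
qed

definition vec_choi :: "'n::finite cmat \<Rightarrow> 'n \<times> 'n \<Rightarrow> complex" where
  "vec_choi V p = V (snd p) (fst p) / complex_of_real (sqrt (real (card (UNIV :: 'n set))))"

(* Moves the A'A | B'B indexing of the Choi state to the A'B' | AB indexing of U. *)
definition regroup :: "('a \<times> 'a) \<times> ('b \<times> 'b) \<Rightarrow> ('a \<times> 'b) \<times> ('a \<times> 'b)" where
  "regroup z = ((fst (fst z), fst (snd z)), (snd (fst z), snd (snd z)))"

lemma sqnorm_vec_choi:
  fixes V :: "'n::finite cmat"
  assumes "unitary V"
  shows "sqnorm (vec_choi V) = 1"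
proof -
  have "sqnorm (vec_choi V) = (\<Sum>j\<in>UNIV. \<Sum>i\<in>UNIV. (cmod (V i j))\<^sup>2) / real (card (UNIV :: 'n set))"
    unfolding sqnorm_def vec_choi_def
    by (simp add: norm_divide power_divide sum_divide_distrib UNIV_Times_UNIV[symmetric]
        sum.cartesian_product case_prod_unfold del: UNIV_Times_UNIV)
  also have "(\<Sum>j\<in>UNIV. \<Sum>i\<in>UNIV. (cmod (V i j))\<^sup>2) = (\<Sum>i\<in>UNIV. \<Sum>j\<in>UNIV. (cmod (V i j))\<^sup>2)"
    by (rule sum.swap)
  finally show ?thesis
    using unitary_frobenius[OF assms] by simp
qed

lemma sqnorm_regroup:
  fixes f :: "('a::finite \<times> 'b::finite) \<times> ('a \<times> 'b) \<Rightarrow> complex"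
  shows "sqnorm (\<lambda>z. f (regroup z)) = sqnorm f"
proof -
  have "bij (regroup :: ('a \<times> 'a) \<times> ('b \<times> 'b) \<Rightarrow> _)"
    by (rule bij_betw_byWitness[where f' = "\<lambda>((a, b), (a', b')). ((a, a'), (b, b'))"])
      (auto simp: regroup_def)
  then show ?thesis
    unfolding sqnorm_def by (rule sum.reindex_bij_betw)
qed

lemma choi_eq_outer: "choi U = outer (\<lambda>z. vec_choi U (regroup z))"
proof -
  let ?r = "sqrt (real (card (UNIV :: ('a \<times> 'b) set)))"
  have "complex_of_real ?r * complex_of_real ?r = complex_of_real (?r * ?r)"
    by (rule of_real_mult[symmetric])
  also have "\<dots> = of_nat (card (UNIV :: 'a set) * card (UNIV :: 'b set))"
    by simp
  finally show ?thesis
    unfolding choi_def outer_def vec_choi_def regroup_def by (simp add: fun_eq_iff)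
qed

lemma vec_choi_product_expansion:
  fixes V :: "nat \<Rightarrow> 'a::finite cmat" and W :: "nat \<Rightarrow> 'b::finite cmat"
  assumes "U = (\<lambda>x y. \<Sum>j<m. complex_of_real (c j) * kron (V j) (W j) x y)"
  shows "(\<lambda>z. vec_choi U (regroup z)) = product_sum m c (\<lambda>j. vec_choi (V j)) (\<lambda>j. vec_choi (W j))"
proof -
  have "complex_of_real (sqrt (real (card (UNIV :: ('a \<times> 'b) set))))
      = complex_of_real (sqrt (real (card (UNIV :: 'a set)))) * complex_of_real (sqrt (real (card (UNIV :: 'b set))))"
    by (simp add: real_sqrt_mult)
  then show ?thesis
    unfolding assms vec_choi_def regroup_def product_sum_def kron_def
    by (simp add: fun_eq_iff sum_divide_distrib algebra_simps)
qed

lemma robust_weight_choi_product_expansion: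
  fixes U :: "('a::finite \<times> 'b::finite) cmat"
  assumes "unitary U" and "\<forall>j<m. unitary (V j) \<and> unitary (W j)"
    and "U = (\<lambda>x y. \<Sum>j<m. complex_of_real (c j) * kron (V j) (W j) x y)"
  shows "(extent_cost m c - 1) / 2 \<in> robust_weights (choi U)"
proof -
  let ?x = "\<lambda>j. vec_choi (V j)" and ?y = "\<lambda>j. vec_choi (W j)"
  have choi: "choi U = product_mixture (polar_indices m) (polar_weight c) (polar_left ?x) (polar_right ?y)"
    unfolding choi_eq_outer vec_choi_product_expansion[OF assms(3)] outer_product_sum ..
  have "trace (choi U) = 1"
    unfolding choi_eq_outer trace_outer sqnorm_regroup sqnorm_vec_choi[OF assms(1)] by simp
  then have "(mixture_mass (polar_indices m) (\<lambda>i. \<bar>polar_weight c i\<bar>) (polar_left ?x) (polar_right ?y) - 1) / 2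
      \<in> robust_weights (choi U)"
    unfolding choi by (intro robust_weight_product_mixture finite_polar_indices)
  moreover have "\<forall>j<m. sqnorm (?x j) = 1 \<and> sqnorm (?y j) = 1"
    using assms(2) by (simp add: sqnorm_vec_choi)
  ultimately show ?thesis
    by (simp add: polar_mass_eq_extent_cost)
qed

section \<open>The Weyl operator basis\<close>

definition unity_root :: "nat \<Rightarrow> nat \<Rightarrow> complex" where
  "unity_root n k = exp (2 * of_real pi * \<i> * of_nat k / of_nat n)"

lemma cmod_unity_root: "cmod (unity_root n k) = 1"
  unfolding unity_root_def by simp

lemma unity_root_mult: "unity_root n (b * k) = unity_root n k ^ b"
  unfolding unity_root_def by (simp flip: exp_of_nat_mult add: mult_ac)

lemma sum_unity_root_orthogonal:
  assumes "j < n" "l < n"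
  shows "(\<Sum>b<n. cnj (unity_root n (b * l)) * unity_root n (b * j)) = (if j = l then of_nat n else 0)"
proof -
  define z where "z = cnj (unity_root n l) * unity_root n j"
  have inverse: "cnj (unity_root n k) * unity_root n k = 1" for k
    using cmod_unity_root by (rule cnj_mult_self_unimodular)
  have "z ^ n = 1"
    using assms complex_root_unity[of n]
    by (simp add: z_def unity_root_def power_mult_distrib flip: complex_cnj_power)
  moreover have "z = 1 \<longleftrightarrow> j = l"
  proof
    assume "z = 1"
    then have "unity_root n j = unity_root n l"
      using inverse[of l] unfolding z_def by (metis mult.assoc mult.commute mult_1)
    then show "j = l"
      using assms complex_root_unity_eq[of n j l] by (simp add: unity_root_def)
  qed (simp add: z_def inverse)
  moreover have "cnj (unity_root n (b * l)) * unity_root n (b * j) = z ^ b" for b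
    by (simp add: z_def unity_root_mult power_mult_distrib complex_cnj_power)
  ultimately show ?thesis
    by (simp add: sum_gp_strict)
qed

lemma add_mod_cancel_right:
  fixes y y' a n :: nat
  assumes "(y + a) mod n = (y' + a) mod n" "y < n" "y' < n"
  shows "y = y'"
proof -
  have "n dvd nat \<bar>int y - int y'\<bar>"
    using assms(1) by (simp add: mod_eq_iff_dvd_symdiff_nat)
  moreover have "nat \<bar>int y - int y'\<bar> < n"
    using assms(2,3) by linarith
  ultimately have "nat \<bar>int y - int y'\<bar> = 0"
    using nat_dvd_not_less by blast
  then show ?thesis by simp
qed

lemma ex1_add_mod:
  fixes y t n :: nat
  assumes "y < n" "t < n"
  shows "\<exists>!a. a < n \<and> (y + a) mod n = t"
proof
  let ?a = "(t + n - y) mod n"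
  have "(y + ?a) mod n = (y + (t + n - y)) mod n"
    by (rule mod_add_right_eq)
  also have "\<dots> = t"
    using assms by simp
  finally have solution: "(y + ?a) mod n = t" .
  then show "?a < n \<and> (y + ?a) mod n = t"
    using assms by simp
  show "a = ?a" if "a < n \<and> (y + a) mod n = t" for a
  proof (rule add_mod_cancel_right)
    show "(a + y) mod n = (?a + y) mod n"
      using that solution by (simp add: add.commute)
  qed (use that assms in simp_all)
qed

lemma unitary_monomial:
  fixes \<pi> :: "'n::finite \<Rightarrow> 'n"
  assumes "inj \<pi>" and unimodular: "\<And>j. cmod (\<phi> j) = 1"
  shows "unitary (\<lambda>i j. if i = \<pi> j then \<phi> j else 0)"
proof -
  let ?M = "\<lambda>i j. if i = \<pi> j then \<phi> j else 0"
  have inverse: "cnj (\<phi> j) * \<phi> j = 1" "\<phi> j * cnj (\<phi> j) = 1" for j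
    using unimodular by (rule cnj_mult_self_unimodular)+
  have "surj \<pi>"
    using \<open>inj \<pi>\<close> by (simp add: finite_UNIV_inj_surj)
  then have preimage: "i = \<pi> j \<longleftrightarrow> j = inv \<pi> i" for i j
    using \<open>inj \<pi>\<close> by (auto simp: surj_f_inv_f)
  have "mmult (adj ?M) ?M i k = (\<Sum>j\<in>UNIV. if j = \<pi> i then cnj (\<phi> i) * (if j = \<pi> k then \<phi> k else 0) else 0)"
    for i k
    unfolding mmult_def adj_def by (intro sum.cong) auto
  also have "\<dots> i k = id_mat i k" for i k
    using \<open>inj \<pi>\<close> inverse by (simp add: id_mat_def inj_eq)
  moreover have "?M i j * cnj (?M k j) = (if j = inv \<pi> i then (if k = i then 1 else 0) else 0)"
    for i j k
  proof (cases "i = \<pi> j")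
    case True
    then show ?thesis using preimage[of i j] inverse by auto
  next
    case False
    then show ?thesis using preimage[of i j] by auto
  qed
  then have "mmult ?M (adj ?M) i k = (\<Sum>j\<in>UNIV. if j = inv \<pi> i then (if k = i then 1 else 0) else 0)"
    for i k
    unfolding mmult_def adj_def by simp
  ultimately show ?thesis
    unfolding unitary_def by (simp add: fun_eq_iff id_mat_def)
qed

definition index_of :: "'n::finite \<Rightarrow> nat" where
  "index_of = (SOME f. bij_betw f UNIV {..<card (UNIV :: 'n set)})"

lemma bij_index_of: "bij_betw (index_of :: 'n::finite \<Rightarrow> nat) UNIV {..<card (UNIV :: 'n set)}"
proof -
  have "\<exists>f. bij_betw f (UNIV :: 'n set) {..<card (UNIV :: 'n set)}"
    using ex_bij_betw_finite_nat[of "UNIV :: 'n set"] by (simp add: atLeast0LessThan)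
  then show ?thesis
    unfolding index_of_def by (rule someI_ex)
qed

lemma index_of_less: "index_of (j :: 'n::finite) < card (UNIV :: 'n set)"
  using bij_betwE[OF bij_index_of] by blast

lemma index_of_eq_iff: "index_of i = index_of j \<longleftrightarrow> i = j"
  using bij_betw_imp_inj_on[OF bij_index_of] by (auto dest: injD)

definition shift :: "nat \<Rightarrow> 'n::finite \<Rightarrow> 'n" where
  "shift a j = inv index_of ((index_of j + a) mod card (UNIV :: 'n set))"

lemma eq_shift_iff:
  fixes i j :: "'n::finite"
  shows "i = shift a j \<longleftrightarrow> index_of i = (index_of j + a) mod card (UNIV :: 'n set)"
proof -
  have "(index_of j + a) mod card (UNIV :: 'n set) < card (UNIV :: 'n set)"
    by (simp add: finite_UNIV_card_ge_0)
  then have "index_of (shift a j) = (index_of j + a) mod card (UNIV :: 'n set)"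
    unfolding shift_def by (intro bij_betw_inv_into_right[OF bij_index_of]) simp
  then show ?thesis
    by (metis index_of_eq_iff)
qed

lemma inj_shift: "inj (shift a :: 'n::finite \<Rightarrow> 'n)"
proof (rule injI)
  fix j j' :: 'n
  assume "shift a j = shift a j'"
  then have "(index_of j + a) mod card (UNIV :: 'n set) = (index_of j' + a) mod card (UNIV :: 'n set)"
    by (metis eq_shift_iff)
  then show "j = j'"
    by (metis add_mod_cancel_right index_of_less index_of_eq_iff)
qed

lemma sum_shift_indicator:
  fixes i j :: "'n::finite"
  shows "(\<Sum>a<card (UNIV :: 'n set). if i = shift a j then c else 0) = c"
proof -
  obtain a0 where "a0 < card (UNIV :: 'n set)"
    and unique: "\<And>a. a < card (UNIV :: 'n set) \<Longrightarrow> i = shift a j \<longleftrightarrow> a = a0"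
    using ex1_add_mod[OF index_of_less index_of_less, of j i] unfolding eq_shift_iff by metis
  then have "(\<Sum>a<card (UNIV :: 'n set). if i = shift a j then c else 0)
      = (\<Sum>a<card (UNIV :: 'n set). if a = a0 then c else 0)"
    by (intro sum.cong) auto
  then show ?thesis
    using \<open>a0 < card (UNIV :: 'n set)\<close> by simp
qed

definition weyl :: "nat \<Rightarrow> nat \<Rightarrow> 'n::finite cmat" where
  "weyl a b i j = (if i = shift a j then unity_root (card (UNIV :: 'n set)) (b * index_of j) else 0)"

lemma unitary_weyl: "unitary (weyl a b)"
  unfolding weyl_def[abs_def] by (rule unitary_monomial[OF inj_shift cmod_unity_root])

lemma weyl_completeness:
  fixes i j k l :: "'n::finite"
  defines "N \<equiv> card (UNIV :: 'n set)"
  shows "(\<Sum>a<N. \<Sum>b<N. cnj (weyl a b k l) * weyl a b i j) = (if i = k \<and> j = l then of_nat N else 0)"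
proof -
  let ?P = "\<lambda>a. k = shift a l \<and> i = shift a j"
  have orthogonal: "(\<Sum>b<N. cnj (unity_root N (b * index_of l)) * unity_root N (b * index_of j))
      = (if j = l then of_nat N else 0)"
    using sum_unity_root_orthogonal[of "index_of j" N "index_of l"] index_of_less[of j] index_of_less[of l]
    by (simp add: N_def index_of_eq_iff)
  have "(\<Sum>b<N. cnj (weyl a b k l) * weyl a b i j) = (if ?P a \<and> j = l then of_nat N else 0)" for a
  proof (cases "?P a")
    case True
    then show ?thesis
      using orthogonal by (simp add: weyl_def N_def)
  next
    case False
    then have "cnj (weyl a b k l) * weyl a b i j = 0" for b
      by (auto simp: weyl_def)
    moreover have "\<not> (?P a \<and> j = l)"
      using False by blast
    ultimately show ?thesis
      by (simp only: if_False sum.neutral_const)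
  qed
  moreover have "(\<Sum>a<N. if ?P a \<and> j = l then of_nat N else 0) = (if i = k \<and> j = l then of_nat N else (0::complex))"
  proof (cases "i = k \<and> j = l")
    case True
    then show ?thesis
      using sum_shift_indicator[of i j "of_nat N"] by (simp add: N_def)
  next
    case False
    then have "\<not> (?P a \<and> j = l)" for a
      by auto
    then have "(if ?P a \<and> j = l then of_nat N else (0::complex)) = 0" for a
      by (rule if_not_P)
    then show ?thesis
      unfolding if_not_P[OF False] by simp
  qed
  ultimately show ?thesis
    by simp
qed

(* The completeness relation of an operator basis that is orthogonal for the Hilbert-Schmidt inner
  product with squared norms d, used in place of orthogonality because expansion and Parseval
  follow from it by direct summation. *)
definition complete_family :: "'k set \<Rightarrow> ('k \<Rightarrow> 'n::finite cmat) \<Rightarrow> bool" where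
  "complete_family K P \<longleftrightarrow> finite K \<and> (\<forall>i j k l. (\<Sum>\<kappa>\<in>K. cnj (P \<kappa> k l) * P \<kappa> i j)
      = (if i = k \<and> j = l then of_nat (card (UNIV :: 'n set)) else 0))"

definition basis_coeff :: "('k \<Rightarrow> 'n::finite cmat) \<Rightarrow> 'n cmat \<Rightarrow> 'k \<Rightarrow> complex" where
  "basis_coeff P U \<kappa> = (\<Sum>x\<in>UNIV. \<Sum>y\<in>UNIV. cnj (P \<kappa> x y) * U x y) / of_nat (card (UNIV :: 'n set))"

lemma complete_family_weyl:
  "complete_family ({..<card (UNIV :: 'n set)} \<times> {..<card (UNIV :: 'n set)}) (\<lambda>(a, b). weyl a b :: 'n::finite cmat)"
proof -
  have "(\<Sum>\<kappa>\<in>{..<card (UNIV :: 'n set)} \<times> {..<card (UNIV :: 'n set)}.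
      cnj ((\<lambda>(a, b). weyl a b) \<kappa> k l) * (\<lambda>(a, b). weyl a b) \<kappa> i j)
    = (\<Sum>a<card (UNIV :: 'n set). \<Sum>b<card (UNIV :: 'n set). cnj (weyl a b k l) * weyl a b i j)"
    for i j k l :: 'n
    by (simp add: sum.cartesian_product case_prod_unfold)
  then show ?thesis
    unfolding complete_family_def weyl_completeness by simp
qed

lemma complete_family_kron:
  fixes P :: "'k \<Rightarrow> 'a::finite cmat" and Q :: "'l \<Rightarrow> 'b::finite cmat"
  assumes "complete_family K P" "complete_family L Q"
  shows "complete_family (K \<times> L) (\<lambda>(\<kappa>, \<nu>). kron (P \<kappa>) (Q \<nu>))"
proof -
  define R where "R = (\<lambda>(\<kappa>, \<nu>). kron (P \<kappa>) (Q \<nu>))"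
  have "(\<Sum>\<mu>\<in>K \<times> L. cnj (R \<mu> x' y') * R \<mu> x y)
      = (\<Sum>\<kappa>\<in>K. cnj (P \<kappa> (fst x') (fst y')) * P \<kappa> (fst x) (fst y)) *
        (\<Sum>\<nu>\<in>L. cnj (Q \<nu> (snd x') (snd y')) * Q \<nu> (snd x) (snd y))" for x y x' y'
    unfolding sum_product sum.cartesian_product R_def kron_def
    by (intro sum.cong refl) (simp add: case_prod_unfold mult_ac)
  then show ?thesis
    using assms unfolding complete_family_def R_def[symmetric] by (auto simp: prod_eq_iff)
qed

lemma complete_family_expansion:
  fixes P :: "'k \<Rightarrow> 'n::finite cmat"
  assumes "complete_family K P"
  shows "U x y = (\<Sum>\<kappa>\<in>K. basis_coeff P U \<kappa> * P \<kappa> x y)"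
proof -
  let ?N = "of_nat (card (UNIV :: 'n set)) :: complex"
  have "(\<Sum>\<kappa>\<in>K. basis_coeff P U \<kappa> * P \<kappa> x y)
      = (\<Sum>x'\<in>UNIV. \<Sum>y'\<in>UNIV. U x' y' * (\<Sum>\<kappa>\<in>K. cnj (P \<kappa> x' y') * P \<kappa> x y)) / ?N"
    unfolding basis_coeff_def sum_divide_distrib sum_distrib_left sum_distrib_right
    by (subst sum.swap, rule sum.cong[OF refl], subst sum.swap, simp add: mult_ac)
  also have "\<dots> = (\<Sum>x'\<in>UNIV. \<Sum>y'\<in>UNIV. if x' = x \<and> y' = y then U x y * ?N else 0) / ?N"
    using assms unfolding complete_family_def by (intro arg_cong[where f = "\<lambda>z. z / ?N"] sum.cong) auto
  also have "\<dots> = U x y"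
  proof -
    have "fst z = x \<and> snd z = y \<longleftrightarrow> z = (x, y)" for z
      by auto
    then show ?thesis
      by (simp add: sum.cartesian_product case_prod_unfold finite_UNIV_card_ge_0)
  qed
  finally show ?thesis ..
qed

lemma complete_family_parseval:
  fixes P :: "'k \<Rightarrow> 'n::finite cmat"
  assumes "complete_family K P"
  shows "(\<Sum>\<kappa>\<in>K. (cmod (basis_coeff P U \<kappa>))\<^sup>2)
    = (\<Sum>x\<in>UNIV. \<Sum>y\<in>UNIV. (cmod (U x y))\<^sup>2) / real (card (UNIV :: 'n set))"
proof -
  let ?N = "of_nat (card (UNIV :: 'n set)) :: complex"
  have "(\<Sum>\<kappa>\<in>K. basis_coeff P U \<kappa> * cnj (basis_coeff P U \<kappa>))
      = (\<Sum>x\<in>UNIV. \<Sum>y\<in>UNIV. cnj (U x y) * (\<Sum>\<kappa>\<in>K. basis_coeff P U \<kappa> * P \<kappa> x y)) / ?N"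
    unfolding basis_coeff_def[of P U] cnj_sum complex_cnj_divide complex_cnj_mult complex_cnj_cnj
      sum_divide_distrib sum_distrib_left sum_distrib_right
    by (subst sum.swap, rule sum.cong[OF refl], subst sum.swap, simp add: mult_ac)
  also have "\<dots> = (\<Sum>x\<in>UNIV. \<Sum>y\<in>UNIV. U x y * cnj (U x y)) / ?N"
    unfolding complete_family_expansion[OF assms, of U, symmetric] by (simp add: mult.commute)
  finally have "complex_of_real (\<Sum>\<kappa>\<in>K. (cmod (basis_coeff P U \<kappa>))\<^sup>2)
      = complex_of_real ((\<Sum>x\<in>UNIV. \<Sum>y\<in>UNIV. (cmod (U x y))\<^sup>2) / real (card (UNIV :: 'n set)))"
    by (simp only: of_real_divide of_real_sum complex_norm_square of_real_of_nat_eq)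
  then show ?thesis
    by (rule of_real_eq_iff[THEN iffD1])
qed

lemma unitary_unimodular_mult:
  assumes "cmod \<phi> = 1" "unitary W"
  shows "unitary (\<lambda>i j. \<phi> * W i j)"
proof -
  have "cnj \<phi> * \<phi> = 1"
    using assms(1) by (rule cnj_mult_self_unimodular)
  then have "cnj (\<phi> * a) * (\<phi> * b) = cnj a * b" "(\<phi> * a) * cnj (\<phi> * b) = a * cnj b" for a b
    by (metis complex_cnj_mult mult.assoc mult.left_commute mult_1 mult.commute)+
  then show ?thesis
    using assms(2) unfolding unitary_def mmult_def adj_def by presburger
qed

definition product_expansion ::
    "('a::finite \<times> 'b::finite) cmat \<Rightarrow> nat \<Rightarrow> (nat \<Rightarrow> real) \<Rightarrow> (nat \<Rightarrow> 'a cmat) \<Rightarrow> (nat \<Rightarrow> 'b cmat) \<Rightarrow> bool" where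
  "product_expansion U m c V W \<longleftrightarrow> 1 \<le> m \<and> (\<forall>j<m. unitary (V j) \<and> unitary (W j)) \<and>
     U = (\<lambda>x y. \<Sum>j<m. complex_of_real (c j) * kron (V j) (W j) x y)"

lemma product_extent_eq_Inf:
  "product_extent U = Inf {extent_cost m c | m c V W. product_expansion U m c V W}"
  unfolding product_extent_def product_expansion_def extent_cost_def ..

lemma extent_cost_le_of_unit_coeffs:
  assumes "(\<Sum>j<m. (c j)\<^sup>2) = 1"
  shows "extent_cost m c \<le> 2 * real m - 1"
proof -
  have "(\<Sum>j<m. \<bar>c j\<bar>)\<^sup>2 \<le> (\<Sum>j<m. (c j)\<^sup>2) * real m"
    using sum_squared_le_sum_of_squares[of "\<lambda>j. \<bar>c j\<bar>" "{..<m}"] by simp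
  then show ?thesis
    using assms unfolding extent_cost_def by simp
qed

lemma unitary_product_expansion:
  fixes U :: "('a::finite \<times> 'b::finite) cmat"
  assumes "unitary U"
  obtains m c V W where "product_expansion U m c V W"
    and "extent_cost m c \<le> 2 * real (card (UNIV :: 'a set))^2 * real (card (UNIV :: 'b set))^2 - 1"
proof -
  define K where "K = ({..<card (UNIV :: 'a set)} \<times> {..<card (UNIV :: 'a set)}) \<times>
      ({..<card (UNIV :: 'b set)} \<times> {..<card (UNIV :: 'b set)})"
  define P where "P = (\<lambda>(\<kappa>, \<nu>). kron (case_prod weyl \<kappa> :: 'a cmat) (case_prod weyl \<nu> :: 'b cmat))"
  define \<alpha> where "\<alpha> = basis_coeff P U"
  define m where "m = card K"
  have complete: "complete_family K P"
    unfolding K_def P_def by (intro complete_family_kron complete_family_weyl)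
  then have "finite K"
    unfolding complete_family_def by simp
  then obtain h where h: "bij_betw h {..<m} K"
    using ex_bij_betw_nat_finite unfolding m_def atLeast0LessThan by blast
  have m: "m = card (UNIV :: 'a set)^2 * card (UNIV :: 'b set)^2"
    unfolding m_def K_def by (simp add: card_cartesian_product power2_eq_square)
  define c where "c j = cmod (\<alpha> (h j))" for j
  \<comment> \<open>the extent only admits real coefficients, so their phases are moved into the unitaries\<close>
  define V where "V j = ((\<lambda>i i'. cis (Arg (\<alpha> (h j))) * case_prod weyl (fst (h j)) i i') :: 'a cmat)" for j
  define W where "W j = (case_prod weyl (snd (h j)) :: 'b cmat)" for j
  have "unitary (V j) \<and> unitary (W j)" for j
    unfolding V_def W_def by (auto simp: case_prod_unfold intro!: unitary_unimodular_mult unitary_weyl)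
  moreover have "U = (\<lambda>x y. \<Sum>j<m. complex_of_real (c j) * kron (V j) (W j) x y)"
  proof (intro ext)
    fix x y
    have "complex_of_real (c j) * kron (V j) (W j) x y = \<alpha> (h j) * P (h j) x y" for j
      using rcis_cmod_Arg[of "\<alpha> (h j)"]
      unfolding c_def V_def W_def P_def kron_def rcis_def by (simp add: case_prod_unfold mult.assoc)
    then show "U x y = (\<Sum>j<m. complex_of_real (c j) * kron (V j) (W j) x y)"
      using complete_family_expansion[OF complete, of U x y]
        sum.reindex_bij_betw[OF h, of "\<lambda>\<kappa>. \<alpha> \<kappa> * P \<kappa> x y"]
      by (simp add: \<alpha>_def)
  qed
  moreover have "1 \<le> m"
    unfolding m by (simp add: finite_UNIV_card_ge_0 Suc_le_eq)
  moreover have "(\<Sum>j<m. (c j)\<^sup>2) = 1"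
    using complete_family_parseval[OF complete, of U] unitary_frobenius[OF assms]
      sum.reindex_bij_betw[OF h, of "\<lambda>\<kappa>. (cmod (\<alpha> \<kappa>))\<^sup>2"]
    by (simp add: \<alpha>_def c_def finite_UNIV_card_ge_0)
  ultimately have "product_expansion U m c V W" "extent_cost m c \<le> 2 * real m - 1"
    unfolding product_expansion_def by (simp_all add: extent_cost_le_of_unit_coeffs)
  then show ?thesis
    using that unfolding m by (simp add: mult.assoc)
qed

lemma cInf_halved_shift_bounds:
  fixes S R :: "real set"
  assumes "v \<in> S" and S_R: "\<And>v. v \<in> S \<Longrightarrow> (v - 1) / 2 \<in> R" and R_nonneg: "\<And>s. s \<in> R \<Longrightarrow> 0 \<le> s"
  shows "0 \<le> Inf R \<and> 1 + 2 * Inf R \<le> Inf S \<and> Inf S \<le> v"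
proof (intro conjI)
  have "bdd_below R"
    using R_nonneg by (intro bdd_belowI)
  show "0 \<le> Inf R"
    using S_R[OF \<open>v \<in> S\<close>] R_nonneg by (intro cInf_greatest) auto
  show "1 + 2 * Inf R \<le> Inf S"
  proof (rule cInf_greatest)
    fix v' assume "v' \<in> S"
    then have "Inf R \<le> (v' - 1) / 2"
      using S_R \<open>bdd_below R\<close> by (intro cInf_lower)
    then show "1 + 2 * Inf R \<le> v'" by simp
  qed (use \<open>v \<in> S\<close> in blast)
  show "Inf S \<le> v"
    using \<open>v \<in> S\<close> S_R R_nonneg by (intro cInf_lower bdd_belowI[of _ 1]) fastforce+
qed

theorem lemma3:
  fixes U :: "('a::finite \<times> 'b::finite) cmat"
  assumes "unitary U"
  shows "1 \<le> choi_robustness U \<and> choi_robustness U \<le> product_extent U \<and>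
         product_extent U \<le> 2 * real (card (UNIV :: 'a set))^2 * real (card (UNIV :: 'b set))^2 - 1"
proof -
  let ?S = "{extent_cost m c | m c (V :: nat \<Rightarrow> 'a cmat) (W :: nat \<Rightarrow> 'b cmat). product_expansion U m c V W}"
  obtain m c and V :: "nat \<Rightarrow> 'a cmat" and W :: "nat \<Rightarrow> 'b cmat"
    where "product_expansion U m c V W"
      and bound: "extent_cost m c \<le> 2 * real (card (UNIV :: 'a set))^2 * real (card (UNIV :: 'b set))^2 - 1"
    using unitary_product_expansion[OF assms] by blast
  then have "extent_cost m c \<in> ?S"
    by blast
  moreover have "(v - 1) / 2 \<in> robust_weights (choi U)" if "v \<in> ?S" for v
    using that robust_weight_choi_product_expansion[OF assms] unfolding product_expansion_def by blast
  ultimately show ?thesis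
    using cInf_halved_shift_bounds[of _ ?S "robust_weights (choi U)"] bound
    unfolding choi_robustness_def robustness_eq_Inf product_extent_eq_Inf
    by (fastforce simp: robust_weights_def)
qed

end
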